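(* Let $0\le a<b$ and $d\in\mathbb{R}$. Let $g$ be a complex-valued $C^1$ function on $[a,b]$ and $I$ a real-valued $C^2$ function on $[a,b]$ such that for some $\alpha>0$ the Lebesgue measure of $\{x\in[a,b]:I'(x)\in2\pi\mathbb{Z}+[-\delta,\delta]\}$ is $\mathcal{O}(\delta^\alpha)$ as $\delta\to0^+$. Let $f:\mathbb{Z}_{\ge0}\to\mathbb{C}$ satisfy $f(\lfloor tN\rfloor)=e^{iNI(t)}g(t)N^d+o(N^d)$ as $N\to\infty$ for each $t>0$, uniformly on $[a,b]$, i.e. \[ \sup_{t\in[a,b]}\frac{\big|f(\lfloor tN\rfloor)-e^{iNI(t)}g(t)N^d\big|}{N^d}\to0\quad(N\to\infty). \] Then, as $N\to\infty$, $\displaystyle\sum_{x=\lfloor aN\rfloor+1}^{\lfloor bN\rfloor}f(x)=o(N^{d+1})$. *)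

theory Defs
  imports "HOL-Analysis.Analysis" "HOL-Library.Landau_Symbols"
begin

end

theory Submission
  imports Defs
begin

text \<open>
  Let S(N) be the sum of exp(i N I(x/N)) g(x/N) over the same range of x. By the uniform
  approximation hypothesis the sum of f differs from N^d S(N) by o(N^(d+1)), so it suffices to
  show S(N) = o(N). Cut the range into blocks of L consecutive integers, L large but fixed.
  On a block starting at m the phase N I(x/N) is, up to a uniformly small error, linear in x
  with slope I'(m/N), and g(x/N) is almost constant; so the block sum is close to g(m/N) times
  a geometric sum with ratio exp(i I'(m/N)). If I'(m/N) has distance more than \<delta> from 2\<pi>\<int>,
  this geometric sum is bounded by 1/sin(\<delta>/2), independently of L. The remaining, resonant,
  blocks span disjoint intervals of length (L-1)/N inside the set where I' is within 2\<delta> of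
  2\<pi>\<int>; the measure of that set tends to 0 with \<delta>, so there are few resonant blocks.
\<close>

lemma tendsto_zero_if_bigo:
  fixes f g :: "'a \<Rightarrow> 'b::real_normed_field"
  assumes "f \<in> O[F](g)" "(g \<longlongrightarrow> 0) F"
  shows "(f \<longlongrightarrow> 0) F"
proof -
  obtain c where "\<forall>\<^sub>F x in F. norm (f x) \<le> c * norm (g x)"
    using assms(1) by (rule landau_o.bigE)
  moreover have "((\<lambda>x. c * norm (g x)) \<longlongrightarrow> 0) F"
    by (intro tendsto_mult_right_zero tendsto_norm_zero assms(2))
  ultimately show ?thesis by (rule Lim_null_comparison)
qed

lemma uniformly_continuous_on_compactE:
  fixes h :: "'a::metric_space \<Rightarrow> 'b::metric_space"
  assumes "continuous_on S h" "compact S" "0 < e"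
  obtains \<rho> where "0 < \<rho>" "\<And>s t. s \<in> S \<Longrightarrow> t \<in> S \<Longrightarrow> dist s t < \<rho> \<Longrightarrow> dist (h s) (h t) \<le> e"
  using compact_uniformly_continuous[OF assms(1,2)] assms(3)
  unfolding uniformly_continuous_on_def by (metis less_imp_le)

lemma norm_exp_i_diff_le:
  fixes u v :: real
  shows "cmod (exp (\<i> * of_real u) - exp (\<i> * of_real v)) \<le> \<bar>u - v\<bar>"
proof -
  have "exp (\<i> * of_real u) - exp (\<i> * of_real v) = exp (\<i> * of_real v) * (exp (\<i> * of_real (u - v)) - 1)"
    by (simp add: algebra_simps flip: exp_add)
  then have "cmod (exp (\<i> * of_real u) - exp (\<i> * of_real v)) = cmod (exp (\<i> * of_real (u - v)) - 1)"
    by (simp add: norm_mult)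
  also have "\<dots> = 2 * \<bar>sin ((u - v) / 2)\<bar>" by (rule dist_exp_i_1)
  also have "\<dots> \<le> \<bar>u - v\<bar>" using abs_sin_x_le_abs_x[of "(u - v) / 2"] by simp
  finally show ?thesis .
qed

lemma norm_geometric_sum_exp_i_le:
  fixes \<theta> \<delta> :: real
  assumes "0 < \<delta>" "\<delta> \<le> pi" "cos \<theta> < cos \<delta>"
  shows "cmod (\<Sum>r<L. exp (\<i> * of_real \<theta>) ^ r) \<le> 1 / sin (\<delta> / 2)"
proof -
  define z where "z = exp (\<i> * of_real \<theta>)"
  have sin_pos: "0 < sin (\<delta> / 2)" using assms by (intro sin_gt_zero) auto
  have "(sin (\<delta> / 2))\<^sup>2 < \<bar>sin (\<theta> / 2)\<bar>\<^sup>2"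
    using assms(3) cos_double_sin[of "\<theta> / 2"] cos_double_sin[of "\<delta> / 2"] by simp
  then have sin_less: "sin (\<delta> / 2) < \<bar>sin (\<theta> / 2)\<bar>"
    using power_less_imp_less_base by fastforce
  have z_dist: "cmod (z - 1) = 2 * \<bar>sin (\<theta> / 2)\<bar>" unfolding z_def by (rule dist_exp_i_1)
  then have "z \<noteq> 1" using sin_less sin_pos by auto
  then have "cmod (\<Sum>r<L. z ^ r) = cmod (z ^ L - 1) / cmod (z - 1)"
    by (simp add: geometric_sum norm_divide)
  also have "\<dots> \<le> 2 / cmod (z - 1)"
  proof (rule divide_right_mono)
    have "cmod (z ^ L - 1) \<le> cmod (z ^ L) + 1" using norm_triangle_ineq4[of "z ^ L" 1] by simp
    then show "cmod (z ^ L - 1) \<le> 2" by (simp add: z_def norm_power)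
  qed simp
  also have "\<dots> \<le> 1 / sin (\<delta> / 2)"
    unfolding z_dist using sin_less sin_pos by (simp add: frac_le)
  finally show ?thesis unfolding z_def .
qed

lemma abs_linear_remainder_le:
  fixes I I' :: "real \<Rightarrow> real"
  assumes deriv: "\<And>u. u \<in> {a..b} \<Longrightarrow> (I has_real_derivative I' u) (at u within {a..b})"
    and t: "t \<in> {a..b}" and s: "s \<in> {a..b}"
    and close: "\<And>u. u \<in> {a..b} \<Longrightarrow> \<bar>u - t\<bar> \<le> \<bar>s - t\<bar> \<Longrightarrow> \<bar>I' u - I' t\<bar> \<le> \<eta>"
  shows "\<bar>I s - I t - I' t * (s - t)\<bar> \<le> \<eta> * \<bar>s - t\<bar>"
proof -
  define S where "S = closed_segment t s"
  have S_sub: "S \<subseteq> {a..b}" unfolding S_def using t s by (simp add: closed_segment_subset)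
  have "((\<lambda>u. I u - I' t * u) has_real_derivative (I' u - I' t)) (at u within S)" if "u \<in> S" for u
    using DERIV_subset[OF deriv S_sub] that S_sub by (auto intro!: derivative_eq_intros)
  moreover have "norm (I' u - I' t) \<le> \<eta>" if "u \<in> S" for u
  proof -
    have "\<bar>u - t\<bar> \<le> \<bar>s - t\<bar>" using that unfolding S_def
      by (auto simp: closed_segment_eq_real_ivl split: if_splits)
    then show ?thesis using close[of u] that S_sub by auto
  qed
  ultimately have "norm ((I s - I' t * s) - (I t - I' t * t)) \<le> \<eta> * norm (s - t)"
    by (intro field_differentiable_bound[of S]) (auto simp: S_def)
  then show ?thesis by (simp add: algebra_simps)
qed

lemma card_mult_le_measure_if_spaced:
  fixes t :: "'a::linorder \<Rightarrow> real"
  assumes J: "finite J" and E: "E \<in> fmeasurable lebesgue" and w: "0 \<le> w"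
    and sub: "\<And>j. j \<in> J \<Longrightarrow> {t j .. t j + w} \<subseteq> E"
    and spaced: "\<And>i j. i \<in> J \<Longrightarrow> j \<in> J \<Longrightarrow> i < j \<Longrightarrow> t i + w < t j"
  shows "real (card J) * w \<le> measure lebesgue E"
proof -
  have "disjoint_family_on (\<lambda>j. {t j .. t j + w}) J"
    unfolding disjoint_family_on_def
    by (metis (no_types, lifting) disjoint_iff atLeastAtMost_iff linorder_neqE spaced
        linorder_not_le order_trans)
  then have "measure lebesgue (\<Union>j\<in>J. {t j .. t j + w}) = (\<Sum>j\<in>J. measure lebesgue {t j .. t j + w})"
    using J by (intro measure_finite_Union) (auto simp: emeasure_lborel_Icc_eq)
  also have "\<dots> = real (card J) * w" using w by simp
  finally have "real (card J) * w = measure lebesgue (\<Union>j\<in>J. {t j .. t j + w})" ..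
  also have "\<dots> \<le> measure lebesgue E"
    using sub J E by (intro measure_mono_fmeasurable) auto
  finally show ?thesis .
qed

lemma sum_lessThan_blocks:
  fixes h :: "nat \<Rightarrow> 'a::comm_monoid_add"
  shows "(\<Sum>y<n. h y) = (\<Sum>j<n div L. \<Sum>r<L. h (j * L + r)) + (\<Sum>y\<in>{n div L * L..<n}. h y)"
proof -
  have "(\<Sum>r<L. h (j * L + r)) = (\<Sum>y\<in>{j * L..<j * L + L}. h y)" for j
    by (rule sum.reindex_bij_witness[of _ "\<lambda>y. y - j * L" "\<lambda>r. j * L + r"]) auto
  then have "(\<Sum>j<n div L. \<Sum>r<L. h (j * L + r)) = (\<Sum>y<n div L * L. h y)"
    by (simp add: sum.nat_group)
  moreover have "n div L * L \<le> n" by (simp add: div_times_less_eq_dividend)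
  ultimately show ?thesis
    by (simp add: lessThan_atLeast0 sum.atLeastLessThan_concat)
qed

lemma norm_sum_le_block_norms:
  fixes h :: "nat \<Rightarrow> 'a::real_normed_vector"
  assumes h: "\<And>y. y < n \<Longrightarrow> norm (h y) \<le> G" and G: "0 \<le> G" and L: "0 < L"
  shows "norm (\<Sum>y<n. h y) \<le> (\<Sum>j<n div L. norm (\<Sum>r<L. h (j * L + r))) + real L * G"
proof -
  have "norm (\<Sum>y\<in>{n div L * L..<n}. h y) \<le> (\<Sum>y\<in>{n div L * L..<n}. G)"
    using h by (intro order.trans[OF norm_sum sum_mono]) auto
  also have "\<dots> = real (n mod L) * G" by (simp add: minus_div_mult_eq_mod)
  also have "\<dots> \<le> real L * G" using L G by (intro mult_right_mono) auto
  finally show ?thesis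
    unfolding sum_lessThan_blocks[of h n L]
    by (intro order.trans[OF norm_triangle_ineq add_mono] norm_sum) auto
qed

lemma sum_norm_geometric_sums_exp_i_le:
  fixes \<theta> :: "nat \<Rightarrow> real"
  assumes \<delta>: "0 < \<delta>" "\<delta> \<le> pi"
  shows "(\<Sum>j<K. cmod (\<Sum>r<L. exp (\<i> * of_real (\<theta> j)) ^ r))
         \<le> real K / sin (\<delta> / 2) + real L * real (card {j. j < K \<and> cos \<delta> \<le> cos (\<theta> j)})"
proof -
  define Res where "Res = {j. j < K \<and> cos \<delta> \<le> cos (\<theta> j)}"
  have "0 < sin (\<delta> / 2)" using \<delta> by (intro sin_gt_zero) auto
  then have "cmod (\<Sum>r<L. exp (\<i> * of_real (\<theta> j)) ^ r) \<le> 1 / sin (\<delta> / 2) + (if j \<in> Res then real L else 0)"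
    if "j < K" for j
  proof (cases "j \<in> Res")
    case True
    have "cmod (\<Sum>r<L. exp (\<i> * of_real (\<theta> j)) ^ r) \<le> (\<Sum>r<L. cmod (exp (\<i> * of_real (\<theta> j)) ^ r))"
      by (rule norm_sum)
    also have "\<dots> = real L" by (simp add: norm_power)
    also have "\<dots> \<le> 1 / sin (\<delta> / 2) + (if j \<in> Res then real L else 0)"
      using True \<open>0 < sin (\<delta> / 2)\<close> by simp
    finally show ?thesis .
  next
    case False
    then show ?thesis using that \<delta> unfolding Res_def by (simp add: norm_geometric_sum_exp_i_le)
  qed
  then have "(\<Sum>j<K. cmod (\<Sum>r<L. exp (\<i> * of_real (\<theta> j)) ^ r))
      \<le> (\<Sum>j<K. 1 / sin (\<delta> / 2) + (if j \<in> Res then real L else 0))"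
    by (intro sum_mono) simp
  also have "\<dots> = real K / sin (\<delta> / 2) + real L * real (card Res)"
  proof -
    have "Res \<subseteq> {..<K}" unfolding Res_def by auto
    then show ?thesis by (simp add: sum.distrib sum.If_cases Int_absorb1 Int_absorb2)
  qed
  finally show ?thesis unfolding Res_def .
qed

lemma norm_sum_le_approx:
  fixes f h :: "'a \<Rightarrow> complex"
  assumes "\<And>x. x \<in> X \<Longrightarrow> cmod (f x - h x * of_real c) \<le> e" and "0 \<le> c"
  shows "cmod (\<Sum>x\<in>X. f x) \<le> c * cmod (\<Sum>x\<in>X. h x) + real (card X) * e"
proof -
  have "(\<Sum>x\<in>X. f x) = of_real c * (\<Sum>x\<in>X. h x) + (\<Sum>x\<in>X. f x - h x * of_real c)"
    by (simp add: sum_distrib_left sum_subtractf mult.commute)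
  also have "cmod \<dots> \<le> c * cmod (\<Sum>x\<in>X. h x) + (\<Sum>x\<in>X. e)"
    using assms by (intro order.trans[OF norm_triangle_ineq add_mono] order.trans[OF norm_sum sum_mono])
      (simp_all add: norm_mult)
  finally show ?thesis by simp
qed

lemma grid_point_in_interval:
  assumes "0 \<le> a" "0 < N" "x \<in> {nat \<lfloor>a * real N\<rfloor> + 1 .. nat \<lfloor>b * real N\<rfloor>}"
  shows "real x / real N \<in> {a..b}"
proof -
  have "0 \<le> a * real N" using assms(1) by simp
  moreover have "real (nat \<lfloor>a * real N\<rfloor> + 1) \<le> real x" using assms(3) by (simp only: of_nat_le_iff) simp
  ultimately have "a * real N < real x" by linarith
  moreover have "int x \<le> \<lfloor>b * real N\<rfloor>" using assms(3) by auto
  then have "real x \<le> b * real N" by (simp add: le_floor_iff)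
  ultimately show ?thesis using assms(2) by (simp add: field_simps)
qed

lemma card_grid_le:
  assumes "0 \<le> a" "a \<le> b"
  shows "real (card {nat \<lfloor>a * real N\<rfloor> + 1 .. nat \<lfloor>b * real N\<rfloor>}) \<le> (b - a) * real N + 1"
proof -
  have "0 \<le> a * real N" "0 \<le> b * real N" using assms by simp_all
  then have "real (nat \<lfloor>b * real N\<rfloor>) \<le> b * real N" "a * real N < real (nat \<lfloor>a * real N\<rfloor>) + 1"
    by linarith+
  moreover have "a * real N \<le> b * real N" using assms by (simp add: mult_right_mono)
  moreover have "(b - a) * real N = b * real N - a * real N" by (simp add: algebra_simps)
  ultimately show ?thesis
    by (cases "nat \<lfloor>a * real N\<rfloor> \<le> nat \<lfloor>b * real N\<rfloor>") (simp_all add: of_nat_diff)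
qed

lemma near_2pi_multiple_iff_cos_le:
  fixes \<delta> y :: real
  assumes "0 \<le> \<delta>" "\<delta> \<le> pi"
  shows "(\<exists>k::int. \<bar>y - 2 * pi * of_int k\<bar> \<le> \<delta>) \<longleftrightarrow> cos \<delta> \<le> cos y"
proof
  assume "\<exists>k::int. \<bar>y - 2 * pi * of_int k\<bar> \<le> \<delta>"
  then obtain k :: int where "\<bar>2 * pi * of_int (-k) + y\<bar> \<le> \<delta>" by auto
  then show "cos \<delta> \<le> cos y" using cos_monotone_aux assms by blast
next
  assume cos_le: "cos \<delta> \<le> cos y"
  define k where "k = \<lfloor>(y + pi) / (2 * pi)\<rfloor>"
  define y' where "y' = y - 2 * pi * of_int k"
  have "of_int k \<le> (y + pi) / (2 * pi)" "(y + pi) / (2 * pi) < of_int k + 1"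
    unfolding k_def by linarith+
  then have y'_range: "-pi \<le> y'" "y' < pi"
    unfolding y'_def by (simp_all add: field_simps)
  have "cos \<bar>y'\<bar> = cos y"
    by (simp add: abs_if y'_def cos_diff cos_int_2pin sin_int_2pin)
  then have "\<bar>y'\<bar> \<le> \<delta>"
    using cos_monotone_0_pi[of \<delta> "\<bar>y'\<bar>"] assms y'_range cos_le by force
  then show "\<exists>k::int. \<bar>y - 2 * pi * of_int k\<bar> \<le> \<delta>" unfolding y'_def by blast
qed

lemma cos_double_le_cos_if_near:
  fixes \<delta> x y :: real
  assumes "0 \<le> \<delta>" "\<delta> \<le> pi / 2" "cos \<delta> \<le> cos y" "\<bar>x - y\<bar> \<le> \<delta>"
  shows "cos (2 * \<delta>) \<le> cos x"
proof -
  obtain k :: int where "\<bar>y - 2 * pi * of_int k\<bar> \<le> \<delta>"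
    using near_2pi_multiple_iff_cos_le[of \<delta> y] assms by auto
  then have "\<bar>x - 2 * pi * of_int k\<bar> \<le> 2 * \<delta>" using assms(4) by linarith
  then show ?thesis using near_2pi_multiple_iff_cos_le[of "2 * \<delta>" x] assms by auto
qed

definition near_resonant :: "(real \<Rightarrow> real) \<Rightarrow> real set \<Rightarrow> real \<Rightarrow> real set" where
  "near_resonant \<phi> S \<delta> = {x \<in> S. \<exists>k::int. \<bar>\<phi> x - 2 * pi * of_int k\<bar> \<le> \<delta>}"

lemma near_resonant_eq_cos_le:
  assumes "0 \<le> \<delta>" "\<delta> \<le> pi"
  shows "near_resonant \<phi> S \<delta> = {x \<in> S. cos \<delta> \<le> cos (\<phi> x)}"
  using near_2pi_multiple_iff_cos_le[OF assms] unfolding near_resonant_def by blast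

lemma compact_near_resonant:
  assumes "compact S" "continuous_on S \<phi>" "0 \<le> \<delta>" "\<delta> \<le> pi"
  shows "compact (near_resonant \<phi> S \<delta>)"
proof -
  have "continuous_on S (\<lambda>x. cos (\<phi> x))" using assms(2) by (intro continuous_intros)
  then have "closed (S \<inter> (\<lambda>x. cos (\<phi> x)) -` {cos \<delta>..})"
    using assms(1) by (intro continuous_closed_preimage) (auto simp: compact_imp_closed)
  moreover have "near_resonant \<phi> S \<delta> = S \<inter> (S \<inter> (\<lambda>x. cos (\<phi> x)) -` {cos \<delta>..})"
    using near_resonant_eq_cos_le[OF assms(3,4)] by auto
  ultimately show ?thesis using assms(1) by (simp only: compact_Int_closed)
qed

lemma small_near_resonant_exists:
  assumes "((\<lambda>\<delta>. measure lebesgue (near_resonant \<phi> S \<delta>)) \<longlongrightarrow> 0) (at_right 0)" "0 < e"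
  obtains \<delta> where "0 < \<delta>" "\<delta> \<le> pi / 2" "measure lebesgue (near_resonant \<phi> S (2 * \<delta>)) \<le> e"
proof -
  have "\<forall>\<^sub>F \<delta> in at_right 0. measure lebesgue (near_resonant \<phi> S \<delta>) < e \<and> \<delta> \<in> {0<..<pi}"
    using order_tendstoD(2)[OF assms] eventually_at_right_real[OF pi_gt_zero]
    by (intro eventually_conj) auto
  then obtain \<delta> where "measure lebesgue (near_resonant \<phi> S \<delta>) < e" "\<delta> \<in> {0<..<pi}"
    using eventually_happens'[OF trivial_limit_at_right_real] by blast
  then show ?thesis by (intro that[of "\<delta> / 2"]) auto
qed

lemma norm_wave_linearization_le:
  fixes g :: "real \<Rightarrow> complex" and I I' :: "real \<Rightarrow> real" and r :: nat
  assumes deriv: "\<And>u. u \<in> {a..b} \<Longrightarrow> (I has_real_derivative I' u) (at u within {a..b})"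
    and t: "t \<in> {a..b}" and s: "s \<in> {a..b}" and \<nu>: "\<nu> > 0" and r: "real r = \<nu> * (s - t)"
    and close: "\<And>u. u \<in> {a..b} \<Longrightarrow> \<bar>u - t\<bar> \<le> \<bar>s - t\<bar> \<Longrightarrow> \<bar>I' u - I' t\<bar> \<le> \<eta>"
    and g_s: "cmod (g s) \<le> G" and g_st: "cmod (g s - g t) \<le> \<gamma>"
  shows "cmod (exp (\<i> * of_real (\<nu> * I s)) * g s
               - exp (\<i> * of_real (\<nu> * I t)) * g t * exp (\<i> * of_real (I' t)) ^ r)
         \<le> G * \<eta> * real r + \<gamma>"
proof -
  define \<psi> where "\<psi> = \<nu> * I t + real r * I' t"
  have "0 \<le> \<nu> * (s - t)" using r by (metis of_nat_0_le_iff)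
  then have "s - t \<ge> 0" using \<nu> by (simp add: zero_le_mult_iff)
  then have "\<nu> * \<bar>s - t\<bar> = real r" using r by simp
  moreover have "\<nu> * I s - \<psi> = \<nu> * (I s - I t - I' t * (s - t))"
    unfolding \<psi>_def r by (simp add: algebra_simps)
  then have "\<bar>\<nu> * I s - \<psi>\<bar> = \<nu> * \<bar>I s - I t - I' t * (s - t)\<bar>"
    using \<nu> by (simp add: abs_mult)
  moreover have "\<bar>I s - I t - I' t * (s - t)\<bar> \<le> \<eta> * \<bar>s - t\<bar>"
    by (rule abs_linear_remainder_le[OF deriv t s close])
  ultimately have phase: "\<bar>\<nu> * I s - \<psi>\<bar> \<le> \<eta> * real r"
    using \<nu> by (metis mult.left_commute mult_left_mono less_imp_le)
  have "exp (\<i> * of_real (\<nu> * I t)) * exp (\<i> * of_real (I' t)) ^ r = exp (\<i> * of_real \<psi>)"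
    unfolding \<psi>_def by (simp add: exp_of_nat_mult[symmetric] algebra_simps flip: exp_add)
  then have "exp (\<i> * of_real (\<nu> * I s)) * g s - exp (\<i> * of_real (\<nu> * I t)) * g t * exp (\<i> * of_real (I' t)) ^ r
      = (exp (\<i> * of_real (\<nu> * I s)) - exp (\<i> * of_real \<psi>)) * g s + exp (\<i> * of_real \<psi>) * (g s - g t)"
    by (simp add: algebra_simps)
  also have "cmod \<dots> \<le> \<bar>\<nu> * I s - \<psi>\<bar> * G + \<gamma>"
    using norm_exp_i_diff_le[of "\<nu> * I s" \<psi>] g_s g_st
    by (intro order.trans[OF norm_triangle_ineq add_mono])
       (auto simp: norm_mult intro!: mult_mono)
  also have "\<dots> \<le> \<eta> * real r * G + \<gamma>"
    using mult_right_mono[OF phase order_trans[OF norm_ge_zero g_s]] by simp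
  finally show ?thesis by (simp add: ac_simps)
qed

definition wave_sample :: "(real \<Rightarrow> real) \<Rightarrow> (real \<Rightarrow> complex) \<Rightarrow> nat \<Rightarrow> nat \<Rightarrow> complex" where
  "wave_sample I g N x = exp (\<i> * of_real (real N * I (real x / real N))) * g (real x / real N)"

lemma norm_wave_sample [simp]: "norm (wave_sample I g N x) = norm (g (real x / real N))"
  by (simp add: wave_sample_def norm_mult)

lemma norm_block_wave_sum_le:
  fixes N m L :: nat and g :: "real \<Rightarrow> complex" and I I' :: "real \<Rightarrow> real"
  assumes I_deriv: "\<And>u. u \<in> {a..b} \<Longrightarrow> (I has_real_derivative I' u) (at u within {a..b})"
    and N: "0 < N" and L: "0 < L"
    and block: "\<And>r. r < L \<Longrightarrow> real (m + r) / real N \<in> {a..b}"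
    and g_bound: "\<And>t. t \<in> {a..b} \<Longrightarrow> cmod (g t) \<le> G"
    and I'_close: "\<And>s t. s \<in> {a..b} \<Longrightarrow> t \<in> {a..b} \<Longrightarrow> \<bar>s - t\<bar> < real L / real N \<Longrightarrow> \<bar>I' s - I' t\<bar> \<le> \<eta>"
    and g_close: "\<And>s t. s \<in> {a..b} \<Longrightarrow> t \<in> {a..b} \<Longrightarrow> \<bar>s - t\<bar> < real L / real N \<Longrightarrow> cmod (g s - g t) \<le> \<gamma>"
  shows "cmod (\<Sum>r<L. wave_sample I g N (m + r))
         \<le> G * cmod (\<Sum>r<L. exp (\<i> * of_real (I' (real m / real N))) ^ r) + real L * (G * \<eta> * real L + \<gamma>)"
proof -
  define t where "t = real m / real N"
  define z where "z = exp (\<i> * of_real (I' t))"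
  have t_in: "t \<in> {a..b}" using block[of 0] L unfolding t_def by simp
  have G: "0 \<le> G" using g_bound[OF t_in] norm_ge_zero order_trans by blast
  have \<eta>: "0 \<le> \<eta>" using I'_close[OF t_in t_in] N L by simp
  have sample_err: "cmod (wave_sample I g N (m + r) - wave_sample I g N m * z ^ r) \<le> G * \<eta> * real L + \<gamma>"
    if r: "r < L" for r
  proof -
    define s where "s = real (m + r) / real N"
    have s_in: "s \<in> {a..b}" using block[OF r] unfolding s_def .
    have r_eq: "real r = real N * (s - t)" unfolding s_def t_def using N by (simp add: field_simps)
    then have "s - t = real r / real N" using N by (simp add: field_simps)
    then have "\<bar>s - t\<bar> = real r / real N" by simp
    then have st: "\<bar>s - t\<bar> < real L / real N" using N r by (simp add: divide_strict_right_mono)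
    have "cmod (wave_sample I g N (m + r) - wave_sample I g N m * z ^ r) \<le> G * \<eta> * real r + \<gamma>"
      unfolding wave_sample_def z_def s_def[symmetric] t_def[symmetric]
    proof (rule norm_wave_linearization_le[OF I_deriv t_in s_in _ r_eq])
      show "\<bar>I' u - I' t\<bar> \<le> \<eta>" if "u \<in> {a..b}" "\<bar>u - t\<bar> \<le> \<bar>s - t\<bar>" for u
        using I'_close[OF that(1) t_in] that(2) st by linarith
    qed (use N g_bound[OF s_in] g_close[OF s_in t_in st] in auto)
    also have "\<dots> \<le> G * \<eta> * real L + \<gamma>" using r G \<eta> by (simp add: mult_left_mono)
    finally show ?thesis .
  qed
  have "(\<Sum>r<L. wave_sample I g N (m + r))
      = wave_sample I g N m * (\<Sum>r<L. z ^ r) + (\<Sum>r<L. wave_sample I g N (m + r) - wave_sample I g N m * z ^ r)"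
    by (simp add: sum_distrib_left sum_subtractf)
  also have "cmod \<dots> \<le> G * cmod (\<Sum>r<L. z ^ r) + (\<Sum>r<L. G * \<eta> * real L + \<gamma>)"
    using g_bound[OF t_in] sample_err unfolding t_def
    by (intro order.trans[OF norm_triangle_ineq add_mono] order.trans[OF norm_sum sum_mono])
       (auto simp: norm_mult mult_right_mono)
  finally show ?thesis unfolding z_def t_def by simp
qed

lemma card_resonant_blocks_le:
  fixes N p L K :: nat and I' :: "real \<Rightarrow> real"
  assumes N: "0 < N" and L: "0 < L"
    and block: "\<And>y. y < K * L \<Longrightarrow> real (p + y) / real N \<in> {a..b}"
    and I'_cont: "continuous_on {a..b} I'"
    and \<delta>: "0 \<le> \<delta>" "\<delta> \<le> pi / 2"
    and I'_close: "\<And>s t. s \<in> {a..b} \<Longrightarrow> t \<in> {a..b} \<Longrightarrow> \<bar>s - t\<bar> < real L / real N \<Longrightarrow> \<bar>I' s - I' t\<bar> \<le> \<delta>"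
  shows "real (card {j. j < K \<and> cos \<delta> \<le> cos (I' (real (p + j * L) / real N))}) * ((real L - 1) / real N)
         \<le> measure lebesgue (near_resonant I' {a..b} (2 * \<delta>))"
proof (rule card_mult_le_measure_if_spaced[where t = "\<lambda>j. real (p + j * L) / real N"])
  have "compact (near_resonant I' {a..b} (2 * \<delta>))"
    using I'_cont \<delta> by (intro compact_near_resonant) auto
  then show "near_resonant I' {a..b} (2 * \<delta>) \<in> fmeasurable lebesgue"
    by (rule lmeasurable_compact)
  show "0 \<le> (real L - 1) / real N" using L by simp
  show "real (p + i * L) / real N + (real L - 1) / real N < real (p + j * L) / real N"
    if "i < j" for i j
  proof -
    have "i * L + L \<le> j * L" using that mult_le_mono1[of "Suc i" j L] by simp
    then have "real (p + i * L) + (real L - 1) < real (p + j * L)" by linarith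
    then show ?thesis using N by (simp add: add_divide_distrib[symmetric] divide_strict_right_mono)
  qed
  fix j assume "j \<in> {j. j < K \<and> cos \<delta> \<le> cos (I' (real (p + j * L) / real N))}"
  then have j: "j < K" and resonant: "cos \<delta> \<le> cos (I' (real (p + j * L) / real N))" by auto
  define t where "t = real (p + j * L) / real N"
  have last_eq: "t + (real L - 1) / real N = real (p + (j * L + (L - 1))) / real N"
    unfolding t_def using L N by (simp add: field_simps of_nat_diff)
  have "j * L + r < K * L" if "r < L" for r
    using that j mult_le_mono1[of "Suc j" K L] by simp
  then have in_range: "j * L < K * L" "j * L + (L - 1) < K * L"
    using L by (metis add_0_right, metis diff_less zero_less_one)
  have ends: "t \<in> {a..b}" "t + (real L - 1) / real N \<in> {a..b}"
    using block[OF in_range(1)] block[OF in_range(2)] by (simp_all only: last_eq) (simp_all only: t_def)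
  show "{t .. t + (real L - 1) / real N} \<subseteq> near_resonant I' {a..b} (2 * \<delta>)"
  proof
    fix u assume u: "u \<in> {t .. t + (real L - 1) / real N}"
    then have u_in: "u \<in> {a..b}" using ends by auto
    have "(real L - 1) / real N < real L / real N" using N by (simp add: divide_strict_right_mono)
    then have "\<bar>u - t\<bar> < real L / real N" using u by auto
    then have "cos (2 * \<delta>) \<le> cos (I' u)"
      using cos_double_le_cos_if_near[OF \<delta> resonant[folded t_def]] I'_close[OF u_in ends(1)] by blast
    then show "u \<in> near_resonant I' {a..b} (2 * \<delta>)"
      using near_resonant_eq_cos_le[of "2 * \<delta>"] \<delta> u_in by auto
  qed
qed simp

lemma norm_wave_sum_le:
  fixes N p n L :: nat and g :: "real \<Rightarrow> complex" and I I' :: "real \<Rightarrow> real"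
  assumes I_deriv: "\<And>u. u \<in> {a..b} \<Longrightarrow> (I has_real_derivative I' u) (at u within {a..b})"
    and I'_cont: "continuous_on {a..b} I'"
    and N: "0 < N" and L: "2 \<le> L"
    and samples: "\<And>y. y < n \<Longrightarrow> real (p + y) / real N \<in> {a..b}"
    and G: "0 \<le> G" and g_bound: "\<And>t. t \<in> {a..b} \<Longrightarrow> cmod (g t) \<le> G"
    and \<delta>: "0 < \<delta>" "\<delta> \<le> pi / 2" and \<eta>: "0 \<le> \<eta>" "\<eta> \<le> \<delta>" and \<gamma>: "0 \<le> \<gamma>"
    and I'_close: "\<And>s t. s \<in> {a..b} \<Longrightarrow> t \<in> {a..b} \<Longrightarrow> \<bar>s - t\<bar> < real L / real N \<Longrightarrow> \<bar>I' s - I' t\<bar> \<le> \<eta>"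
    and g_close: "\<And>s t. s \<in> {a..b} \<Longrightarrow> t \<in> {a..b} \<Longrightarrow> \<bar>s - t\<bar> < real L / real N \<Longrightarrow> cmod (g s - g t) \<le> \<gamma>"
  shows "cmod (\<Sum>y<n. wave_sample I g N (p + y))
         \<le> real n * G / (real L * sin (\<delta> / 2))
           + 2 * G * real N * measure lebesgue (near_resonant I' {a..b} (2 * \<delta>))
           + real n * (G * \<eta> * real L + \<gamma>) + real L * G"
proof -
  define K where "K = n div L"
  define \<theta> where "\<theta> = (\<lambda>j. I' (real (p + j * L) / real N))"
  define \<mu> where "\<mu> = measure lebesgue (near_resonant I' {a..b} (2 * \<delta>))"
  define e where "e = G * \<eta> * real L + \<gamma>"
  define R where "R = real (card {j. j < K \<and> cos \<delta> \<le> cos (\<theta> j)})"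
  have KL: "K * L \<le> n" unfolding K_def by (simp add: div_times_less_eq_dividend)
  then have KLn: "real K * real L \<le> real n" by (simp flip: of_nat_mult)
  have sin_pos: "0 < sin (\<delta> / 2)" using \<delta> by (intro sin_gt_zero) auto
  have block_le: "cmod (\<Sum>r<L. wave_sample I g N (p + (j * L + r)))
      \<le> G * cmod (\<Sum>r<L. exp (\<i> * of_real (\<theta> j)) ^ r) + real L * e" if "j < K" for j
    unfolding \<theta>_def e_def add.assoc[symmetric]
  proof (rule norm_block_wave_sum_le[OF I_deriv N _ _ g_bound I'_close g_close])
    show "real (p + j * L + r) / real N \<in> {a..b}" if "r < L" for r
      using samples[of "j * L + r"] that \<open>j < K\<close> KL mult_le_mono1[of "Suc j" K L]
      by (simp add: add.assoc)
  qed (use L in auto)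
  have resonant: "R * ((real L - 1) / real N) \<le> \<mu>"
    unfolding R_def \<mu>_def \<theta>_def
  proof (rule card_resonant_blocks_le[OF N _ _ I'_cont])
    show "real (p + y) / real N \<in> {a..b}" if "y < K * L" for y
      using samples that KL by simp
    show "\<bar>I' s - I' t\<bar> \<le> \<delta>" if "s \<in> {a..b}" "t \<in> {a..b}" "\<bar>s - t\<bar> < real L / real N" for s t
      using I'_close[OF that] \<eta>(2) by linarith
  qed (use L \<delta> in auto)
  have e: "0 \<le> e" unfolding e_def using G \<eta> \<gamma> by simp
  have "(\<Sum>j<K. cmod (\<Sum>r<L. wave_sample I g N (p + (j * L + r))))
      \<le> (\<Sum>j<K. G * cmod (\<Sum>r<L. exp (\<i> * of_real (\<theta> j)) ^ r) + real L * e)"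
    using block_le by (intro sum_mono) simp
  also have "\<dots> = G * (\<Sum>j<K. cmod (\<Sum>r<L. exp (\<i> * of_real (\<theta> j)) ^ r)) + real K * (real L * e)"
    by (simp add: sum.distrib sum_distrib_left)
  also have "\<dots> \<le> G * (real K / sin (\<delta> / 2) + real L * R) + real K * (real L * e)"
    unfolding R_def using sum_norm_geometric_sums_exp_i_le[where \<theta>=\<theta> and \<delta>=\<delta> and K=K and L=L] \<delta> G
    by (intro add_right_mono mult_left_mono) auto
  also have "\<dots> \<le> real n * G / (real L * sin (\<delta> / 2)) + 2 * G * real N * \<mu> + real n * e"
  proof -
    have Ks: "real K / sin (\<delta> / 2) \<le> real n / (real L * sin (\<delta> / 2))"
      using KLn L sin_pos by (simp add: field_simps)
    have LR: "real L * R \<le> 2 * (real N * \<mu>)"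
    proof -
      have "R * (real L - 1) \<le> real N * \<mu>" using resonant N by (simp add: field_simps)
      moreover have "real L * R \<le> 2 * (real L - 1) * R"
        using L unfolding R_def by (intro mult_right_mono) auto
      moreover have "2 * (real L - 1) * R = 2 * (R * (real L - 1))" by simp
      ultimately show ?thesis by linarith
    qed
    have Ke: "real K * (real L * e) \<le> real n * e"
      using mult_right_mono[OF KLn e] by (simp add: mult.assoc)
    have "G * (real K / sin (\<delta> / 2) + real L * R)
        \<le> G * (real n / (real L * sin (\<delta> / 2)) + 2 * (real N * \<mu>))"
      using G Ks LR by (intro mult_left_mono add_mono) auto
    also have "\<dots> = real n * G / (real L * sin (\<delta> / 2)) + 2 * G * real N * \<mu>"
      by (simp add: algebra_simps)
    finally show ?thesis using Ke by linarith
  qed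
  finally have "(\<Sum>j<K. cmod (\<Sum>r<L. wave_sample I g N (p + (j * L + r))))
      \<le> real n * G / (real L * sin (\<delta> / 2)) + 2 * G * real N * \<mu> + real n * e" .
  moreover have "cmod (\<Sum>y<n. wave_sample I g N (p + y))
      \<le> (\<Sum>j<K. cmod (\<Sum>r<L. wave_sample I g N (p + (j * L + r)))) + real L * G"
    unfolding K_def using samples g_bound G L by (intro norm_sum_le_block_norms) auto
  ultimately show ?thesis unfolding \<mu>_def e_def by linarith
qed

lemma norm_grid_wave_sum_le:
  fixes N L :: nat and g :: "real \<Rightarrow> complex" and I I' :: "real \<Rightarrow> real"
  assumes ab: "0 \<le> a" "a \<le> b"
    and I_deriv: "\<And>u. u \<in> {a..b} \<Longrightarrow> (I has_real_derivative I' u) (at u within {a..b})"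
    and I'_cont: "continuous_on {a..b} I'"
    and N: "1 \<le> N" and L: "2 \<le> L"
    and G: "0 \<le> G" and g_bound: "\<And>t. t \<in> {a..b} \<Longrightarrow> cmod (g t) \<le> G"
    and \<delta>: "0 < \<delta>" "\<delta> \<le> pi / 2" and \<eta>: "0 \<le> \<eta>" "\<eta> \<le> \<delta>" and \<gamma>: "0 \<le> \<gamma>"
    and I'_close: "\<And>s t. s \<in> {a..b} \<Longrightarrow> t \<in> {a..b} \<Longrightarrow> \<bar>s - t\<bar> < real L / real N \<Longrightarrow> \<bar>I' s - I' t\<bar> \<le> \<eta>"
    and g_close: "\<And>s t. s \<in> {a..b} \<Longrightarrow> t \<in> {a..b} \<Longrightarrow> \<bar>s - t\<bar> < real L / real N \<Longrightarrow> cmod (g s - g t) \<le> \<gamma>"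
  shows "cmod (\<Sum>x\<in>{nat \<lfloor>a * real N\<rfloor> + 1 .. nat \<lfloor>b * real N\<rfloor>}. wave_sample I g N x)
         \<le> (b - a + 1) * real N * G / (real L * sin (\<delta> / 2))
           + 2 * G * real N * measure lebesgue (near_resonant I' {a..b} (2 * \<delta>))
           + (b - a + 1) * real N * (G * \<eta> * real L + \<gamma>) + real L * G"
proof -
  define p where "p = nat \<lfloor>a * real N\<rfloor> + 1"
  define n where "n = card {p .. nat \<lfloor>b * real N\<rfloor>}"
  have "(\<Sum>x\<in>{p .. nat \<lfloor>b * real N\<rfloor>}. wave_sample I g N x) = (\<Sum>y<n. wave_sample I g N (p + y))"
    by (rule sum.reindex_bij_witness[of _ "\<lambda>y. p + y" "\<lambda>x. x - p"]) (auto simp: n_def)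
  also have "cmod \<dots> \<le> real n * G / (real L * sin (\<delta> / 2))
           + 2 * G * real N * measure lebesgue (near_resonant I' {a..b} (2 * \<delta>))
           + real n * (G * \<eta> * real L + \<gamma>) + real L * G"
  proof (rule norm_wave_sum_le[OF I_deriv I'_cont _ L _ G g_bound \<delta> \<eta> \<gamma> I'_close g_close])
    show "real (p + y) / real N \<in> {a..b}" if "y < n" for y
      using that N ab(1) by (intro grid_point_in_interval) (auto simp: n_def p_def)
  qed (use N in auto)
  also have "\<dots> \<le> (b - a + 1) * real N * G / (real L * sin (\<delta> / 2))
           + 2 * G * real N * measure lebesgue (near_resonant I' {a..b} (2 * \<delta>))
           + (b - a + 1) * real N * (G * \<eta> * real L + \<gamma>) + real L * G"
  proof -
    have "real n \<le> (b - a) * real N + 1" unfolding n_def p_def using card_grid_le[OF ab] .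
    also have "\<dots> \<le> (b - a + 1) * real N" using N by (simp add: algebra_simps)
    finally have n_le: "real n \<le> (b - a + 1) * real N" .
    have "0 < sin (\<delta> / 2)" using \<delta> by (intro sin_gt_zero) auto
    then show ?thesis using n_le G \<eta> \<gamma> L
      by (intro add_mono order.refl mult_right_mono divide_right_mono) auto
  qed
  finally show ?thesis unfolding p_def .
qed

lemma wave_sum_small_o:
  fixes a b :: real and g :: "real \<Rightarrow> complex" and I I' :: "real \<Rightarrow> real"
  assumes ab: "0 \<le> a" "a \<le> b"
    and g_cont: "continuous_on {a..b} g"
    and I_deriv: "\<And>u. u \<in> {a..b} \<Longrightarrow> (I has_real_derivative I' u) (at u within {a..b})"
    and I'_cont: "continuous_on {a..b} I'"
    and resonance: "((\<lambda>\<delta>. measure lebesgue (near_resonant I' {a..b} \<delta>)) \<longlongrightarrow> 0) (at_right 0)"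
  shows "(\<lambda>N. \<Sum>x\<in>{nat \<lfloor>a * real N\<rfloor> + 1 .. nat \<lfloor>b * real N\<rfloor>}. wave_sample I g N x) \<in> o(\<lambda>N. of_nat N)"
proof (rule landau_o.smallI)
  fix \<epsilon> :: real assume \<epsilon>: "0 < \<epsilon>"
  obtain G where G: "0 < G" and g_bound: "\<And>t. t \<in> {a..b} \<Longrightarrow> cmod (g t) \<le> G"
    using compact_imp_bounded[OF compact_continuous_image[OF g_cont compact_Icc]]
    unfolding bounded_pos by auto
  define W where "W = b - a + 1"
  have W: "1 \<le> W" using ab unfolding W_def by simp
  obtain \<delta> where \<delta>: "0 < \<delta>" "\<delta> \<le> pi / 2"
    and \<mu>: "measure lebesgue (near_resonant I' {a..b} (2 * \<delta>)) \<le> \<epsilon> / (8 * G)"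
    using small_near_resonant_exists[OF resonance, of "\<epsilon> / (8 * G)"] \<epsilon> G by auto
  define s where "s = sin (\<delta> / 2)"
  have s: "0 < s" unfolding s_def using \<delta> by (intro sin_gt_zero) auto
  define L :: nat where "L = nat \<lceil>8 * W * G / (s * \<epsilon>)\<rceil> + 2"
  have L: "2 \<le> L" "8 * W * G / (s * \<epsilon>) \<le> real L" unfolding L_def by linarith+
  define \<eta> where "\<eta> = min \<delta> (\<epsilon> / (8 * W * G * real L))"
  define \<gamma> where "\<gamma> = \<epsilon> / (8 * W)"
  have \<eta>: "0 < \<eta>" "\<eta> \<le> \<delta>" "\<eta> \<le> \<epsilon> / (8 * W * G * real L)"
    unfolding \<eta>_def using \<delta> \<epsilon> W G L by auto
  have \<gamma>: "0 < \<gamma>" unfolding \<gamma>_def using \<epsilon> W by simp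
  obtain \<rho>1 where \<rho>1: "0 < \<rho>1" "\<And>s t. s \<in> {a..b} \<Longrightarrow> t \<in> {a..b} \<Longrightarrow> dist s t < \<rho>1 \<Longrightarrow> dist (I' s) (I' t) \<le> \<eta>"
    using uniformly_continuous_on_compactE[OF I'_cont compact_Icc \<eta>(1)] by metis
  obtain \<rho>2 where \<rho>2: "0 < \<rho>2" "\<And>s t. s \<in> {a..b} \<Longrightarrow> t \<in> {a..b} \<Longrightarrow> dist s t < \<rho>2 \<Longrightarrow> dist (g s) (g t) \<le> \<gamma>"
    using uniformly_continuous_on_compactE[OF g_cont compact_Icc \<gamma>] by metis
  define \<rho> where "\<rho> = min \<rho>1 \<rho>2"
  have \<rho>: "0 < \<rho>" unfolding \<rho>_def using \<rho>1 \<rho>2 by simp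
  have "\<forall>\<^sub>F N in sequentially. real L / real N < \<rho> \<and> real L * G / real N < \<epsilon> / 8 \<and> 1 \<le> N"
    using order_tendstoD(2)[OF lim_const_over_n[of "real L"] \<rho>]
      order_tendstoD(2)[OF lim_const_over_n[of "real L * G"], of "\<epsilon> / 8"] \<epsilon>
    by (intro eventually_conj eventually_ge_at_top) simp_all
  then show "\<forall>\<^sub>F N in sequentially. norm (\<Sum>x\<in>{nat \<lfloor>a * real N\<rfloor> + 1 .. nat \<lfloor>b * real N\<rfloor>}. wave_sample I g N x)
               \<le> \<epsilon> * norm (of_nat N :: complex)"
  proof eventually_elim
    case (elim N)
    then have N: "1 \<le> N" "0 < real N" and LN: "real L / real N < \<rho>" "real L * G < \<epsilon> / 8 * real N"
      by (auto simp: field_simps)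
    have "cmod (\<Sum>x\<in>{nat \<lfloor>a * real N\<rfloor> + 1 .. nat \<lfloor>b * real N\<rfloor>}. wave_sample I g N x)
         \<le> W * real N * G / (real L * s)
           + 2 * G * real N * measure lebesgue (near_resonant I' {a..b} (2 * \<delta>))
           + W * real N * (G * \<eta> * real L + \<gamma>) + real L * G"
      unfolding W_def s_def
      using \<rho>1(2) \<rho>2(2) LN(1) \<eta> \<gamma> G
      by (intro norm_grid_wave_sum_le[OF ab I_deriv I'_cont N(1) L(1) _ g_bound \<delta>])
        (auto simp: \<rho>_def dist_real_def dist_norm)
    also have "\<dots> \<le> \<epsilon> / 8 * real N + \<epsilon> / 4 * real N + \<epsilon> / 4 * real N + \<epsilon> / 8 * real N"
    proof -
      have "8 * W * G \<le> real L * (s * \<epsilon>)" using L(2) s \<epsilon> by (simp add: pos_divide_le_eq)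
      then have "W * G / (real L * s) \<le> \<epsilon> / 8" using L(1) s by (simp add: pos_divide_le_eq ac_simps)
      from mult_right_mono[OF this, of "real N"]
      have 1: "W * real N * G / (real L * s) \<le> \<epsilon> / 8 * real N" using N by (simp add: ac_simps)
      have 2: "2 * G * real N * measure lebesgue (near_resonant I' {a..b} (2 * \<delta>)) \<le> \<epsilon> / 4 * real N"
        using mult_left_mono[OF \<mu>, of "2 * G * real N"] G N by simp
      have "G * \<eta> * real L \<le> G * (\<epsilon> / (8 * W * G * real L)) * real L"
        using \<eta>(3) G L by (intro mult_right_mono mult_left_mono) auto
      then have "G * \<eta> * real L + \<gamma> \<le> \<epsilon> / (4 * W)" using G L(1) W unfolding \<gamma>_def by simp
      from mult_left_mono[OF this, of "W * real N"]
      have 3: "W * real N * (G * \<eta> * real L + \<gamma>) \<le> \<epsilon> / 4 * real N" using W N by simp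
      show ?thesis using 1 2 3 LN(2) by linarith
    qed
    also have "\<dots> \<le> \<epsilon> * norm (of_nat N :: complex)" using \<epsilon> N by simp
    finally show ?case .
  qed
qed

lemma sum_small_o_if_uniform_wave_approx:
  fixes f :: "nat \<Rightarrow> complex" and g :: "real \<Rightarrow> complex" and I :: "real \<Rightarrow> real"
  assumes ab: "0 \<le> a" "a \<le> b"
    and unif: "\<forall>\<epsilon>>0. \<forall>\<^sub>F N in sequentially. \<forall>t\<in>{a..b}.
                 cmod (f (nat \<lfloor>t * real N\<rfloor>) - exp (\<i> * of_real (real N * I t)) * g t * of_real (real N powr d))
                   \<le> \<epsilon> * real N powr d"
    and wave_sum: "(\<lambda>N. \<Sum>x\<in>{nat \<lfloor>a * real N\<rfloor> + 1 .. nat \<lfloor>b * real N\<rfloor>}. wave_sample I g N x) \<in> o(\<lambda>N. of_nat N)"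
  shows "(\<lambda>N. \<Sum>x\<in>{nat \<lfloor>a * real N\<rfloor> + 1 .. nat \<lfloor>b * real N\<rfloor>}. f x) \<in> o(\<lambda>N. of_real (real N powr (d + 1)))"
proof (rule landau_o.smallI)
  fix c :: real assume c: "0 < c"
  define W where "W = b - a + 1"
  have W: "1 \<le> W" using ab unfolding W_def by simp
  have "\<forall>\<^sub>F N in sequentially.
          cmod (\<Sum>x\<in>{nat \<lfloor>a * real N\<rfloor> + 1 .. nat \<lfloor>b * real N\<rfloor>}. wave_sample I g N x) \<le> c / 2 * real N
        \<and> (\<forall>t\<in>{a..b}. cmod (f (nat \<lfloor>t * real N\<rfloor>) - exp (\<i> * of_real (real N * I t)) * g t * of_real (real N powr d))
                        \<le> c / (2 * W) * real N powr d)
        \<and> 1 \<le> N"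
    using landau_o.smallD[OF wave_sum, of "c / 2"] unif[rule_format, of "c / (2 * W)"] c W
    by (intro eventually_conj eventually_ge_at_top) simp_all
  then show "\<forall>\<^sub>F N in sequentially. norm (\<Sum>x\<in>{nat \<lfloor>a * real N\<rfloor> + 1 .. nat \<lfloor>b * real N\<rfloor>}. f x)
               \<le> c * norm (of_real (real N powr (d + 1)) :: complex)"
  proof eventually_elim
    case (elim N)
    define X where "X = {nat \<lfloor>a * real N\<rfloor> + 1 .. nat \<lfloor>b * real N\<rfloor>}"
    define P where "P = real N powr d"
    have N: "1 \<le> N" "0 < N" using elim by auto
    have P: "0 \<le> P" unfolding P_def by simp
    have err: "cmod (f x - wave_sample I g N x * of_real P) \<le> c / (2 * W) * P" if "x \<in> X" for x
    proof -
      have "real x / real N \<in> {a..b}" using grid_point_in_interval[OF ab(1) N(2)] that unfolding X_def .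
      moreover have "nat \<lfloor>real x / real N * real N\<rfloor> = x" using N by simp
      ultimately show ?thesis using elim unfolding P_def wave_sample_def by (metis mult.assoc)
    qed
    have "real (card X) \<le> W * real N"
      using card_grid_le[OF ab, of N] N unfolding X_def W_def by (simp add: algebra_simps)
    then have "real (card X) * (c / (2 * W) * P) \<le> W * real N * (c / (2 * W) * P)"
      using c W P by (intro mult_right_mono) auto
    moreover have "cmod (\<Sum>x\<in>X. f x) \<le> P * cmod (\<Sum>x\<in>X. wave_sample I g N x) + real (card X) * (c / (2 * W) * P)"
      using err P by (rule norm_sum_le_approx)
    moreover have "P * cmod (\<Sum>x\<in>X. wave_sample I g N x) \<le> P * (c / 2 * real N)"
      using elim P unfolding X_def by (intro mult_left_mono) auto
    ultimately have "cmod (\<Sum>x\<in>X. f x) \<le> P * (c / 2 * real N) + W * real N * (c / (2 * W) * P)"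
      by linarith
    also have "\<dots> = c * norm (of_real (real N powr (d + 1)) :: complex)"
      using W N unfolding P_def by (simp add: powr_add field_simps norm_mult)
    finally show ?case unfolding X_def .
  qed
qed

text \<open>The differentiability hypotheses on \<open>g\<close> and \<open>I'\<close> enter only through the continuity
  of \<open>g\<close> and \<open>I'\<close>.\<close>

theorem proposition4p2:
  fixes a b d :: real
    and g g' :: "real \<Rightarrow> complex"
    and I I' I'' :: "real \<Rightarrow> real"
    and f :: "nat \<Rightarrow> complex"
  assumes ab: "0 \<le> a" "a < b"
    and g_deriv: "\<And>t. t \<in> {a..b} \<Longrightarrow> (g has_vector_derivative g' t) (at t within {a..b})"
    and g'_cont: "continuous_on {a..b} g'"
    and I_deriv: "\<And>t. t \<in> {a..b} \<Longrightarrow> (I has_real_derivative I' t) (at t within {a..b})"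
    and I'_deriv: "\<And>t. t \<in> {a..b} \<Longrightarrow> (I' has_real_derivative I'' t) (at t within {a..b})"
    and I''_cont: "continuous_on {a..b} I''"
    and meas: "\<exists>\<alpha>>0. (\<lambda>\<delta>. measure lebesgue {x \<in> {a..b}. \<exists>k::int. \<bar>I' x - 2 * pi * of_int k\<bar> \<le> \<delta>})
                    \<in> O[at_right 0](\<lambda>\<delta>. \<delta> powr \<alpha>)"
    and unif: "\<forall>\<epsilon>>0. \<forall>\<^sub>F N in sequentially. \<forall>t\<in>{a..b}.
                 cmod (f (nat \<lfloor>t * real N\<rfloor>) - exp (\<i> * of_real (real N * I t)) * g t * of_real (real N powr d))
                   \<le> \<epsilon> * real N powr d"
  shows "(\<lambda>N. \<Sum>x\<in>{nat \<lfloor>a * real N\<rfloor> + 1 .. nat \<lfloor>b * real N\<rfloor>}. f x) \<in> o(\<lambda>N. of_real (real N powr (d + 1)))"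
proof -
  have g_cont: "continuous_on {a..b} g"
    using g_deriv has_vector_derivative_continuous continuous_on_eq_continuous_within by blast
  have I'_cont: "continuous_on {a..b} I'" using I'_deriv by (rule DERIV_continuous_on)
  obtain \<alpha> where \<alpha>: "0 < \<alpha>"
    and resonance_bigo: "(\<lambda>\<delta>. measure lebesgue (near_resonant I' {a..b} \<delta>)) \<in> O[at_right 0](\<lambda>\<delta>. \<delta> powr \<alpha>)"
    using meas unfolding near_resonant_def by blast
  have "((\<lambda>\<delta>::real. \<delta> powr \<alpha>) \<longlongrightarrow> 0) (at_right 0)"
    using \<alpha> by (intro tendsto_zero_powrI tendsto_ident_at tendsto_const eventually_at_rightI[of 0 1]) auto
  with resonance_bigo have "((\<lambda>\<delta>. measure lebesgue (near_resonant I' {a..b} \<delta>)) \<longlongrightarrow> 0) (at_right 0)"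
    by (rule tendsto_zero_if_bigo)
  then have "(\<lambda>N. \<Sum>x\<in>{nat \<lfloor>a * real N\<rfloor> + 1 .. nat \<lfloor>b * real N\<rfloor>}. wave_sample I g N x) \<in> o(\<lambda>N. of_nat N)"
    using ab by (intro wave_sum_small_o[OF _ _ g_cont I_deriv I'_cont]) auto
  then show ?thesis using ab by (intro sum_small_o_if_uniform_wave_approx[OF _ _ unif]) auto
qed

end
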